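(* For integers $j,k,l>1$ let $G_{j,k,l}$ be the group with presentation $\langle x,y,z \mid x^j=e,\ y^k=e,\ xy=z^l\rangle$. Then $G_{j,k,l}$ is solvable if and only if $j=k=l=2$. Moreover $G_{2,2,2}$ is polycyclic. *)

theory Defs
  imports "HOL-Algebra.Algebra"
begin

text \<open>A letter is a generator together with a flag: False = the generator, True = its inverse.\<close>
type_synonym 'g letter = "'g \<times> bool"

definition inv_letter :: "'g letter \<Rightarrow> 'g letter" where
  "inv_letter a = (fst a, \<not> snd a)"

inductive pres_eq :: "'g letter list set \<Rightarrow> 'g letter list \<Rightarrow> 'g letter list \<Rightarrow> bool"
  for R where
    refl: "pres_eq R w w"
  | sym: "pres_eq R v w \<Longrightarrow> pres_eq R w v"
  | trans: "pres_eq R u v \<Longrightarrow> pres_eq R v w \<Longrightarrow> pres_eq R u w"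
  | cancel: "pres_eq R (u @ [a, inv_letter a] @ v) (u @ v)"
  | relator: "r \<in> R \<Longrightarrow> pres_eq R (u @ r @ v) (u @ v)"

definition pres_class :: "'g letter list set \<Rightarrow> 'g letter list \<Rightarrow> 'g letter list set" where
  "pres_class R w = {v. pres_eq R w v}"

definition presented_group :: "'g letter list set \<Rightarrow> 'g letter list set monoid" where
  "presented_group R =
     \<lparr> carrier = range (pres_class R),
       monoid.mult = (\<lambda>A B. {w. \<exists>a\<in>A. \<exists>b\<in>B. pres_eq R (a @ b) w}),
       one = pres_class R [] \<rparr>"

datatype gen = GX | GY | GZ

definition G_rels :: "nat \<Rightarrow> nat \<Rightarrow> nat \<Rightarrow> gen letter list set" where
  "G_rels j k l =
     { replicate j (GX, False),
       replicate k (GY, False),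
       [(GX, False), (GY, False)] @ replicate l (GZ, True) }"

definition G_jkl :: "nat \<Rightarrow> nat \<Rightarrow> nat \<Rightarrow> gen letter list set monoid" where
  "G_jkl j k l = presented_group (G_rels j k l)"

inductive polycyclic_seq :: "('a, 'b) monoid_scheme \<Rightarrow> 'a set \<Rightarrow> bool"
  for G where
    unity: "polycyclic_seq G { \<one>\<^bsub>G\<^esub> }"
  | extension: "\<lbrakk> polycyclic_seq G K; K \<lhd> (G \<lparr> carrier := H \<rparr>); subgroup H G;
                  cyclic_group ((G \<lparr> carrier := H \<rparr>) Mod K) \<rbrakk> \<Longrightarrow> polycyclic_seq G H"

definition polycyclic :: "('a, 'b) monoid_scheme \<Rightarrow> bool"
  where "polycyclic G \<longleftrightarrow> polycyclic_seq G (carrier G)"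

end

theory Submission
  imports Defs
begin

text \<open>For \<open>(j, k, l) \<noteq> (2, 2, 2)\<close> the group \<open>G\<^sub>j\<^sub>,\<^sub>k\<^sub>,\<^sub>l\<close> acts on \<open>\<nat>\<close> (or on \<open>l\<close> copies of \<open>\<nat>\<close>)
  so that some word \<open>t\<close> acts as a 3-cycle equal to the commutator of two conjugates of itself.
  The conjugates of the image of \<open>t\<close> then form a set of commutators of its own elements, which
  lies in every term of a subnormal series with abelian factors of the image; so a solvable
  group would send \<open>t\<close> to the identity. The 3-cycles come from commutators of permutations whose
  supports meet in exactly one point.
  For \<open>G\<^sub>2\<^sub>,\<^sub>2\<^sub>,\<^sub>2\<close>, the series \<open>1 \<lhd> \<langle>z\<^sup>2\<rangle> \<lhd> E \<lhd> G\<close>, with \<open>E\<close> the classes of words of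
  even length, has cyclic factors: \<open>z\<^sup>2 = x y\<close> is inverted by \<open>x\<close> and \<open>y\<close>, and modulo
  \<open>\<langle>z\<^sup>2\<rangle>\<close> the group is infinite dihedral, with \<open>E\<close> generated by \<open>x z\<close>.\<close>

section \<open>Presented groups\<close>

definition inv_word :: "'g letter list \<Rightarrow> 'g letter list" where
  "inv_word w = rev (map inv_letter w)"

lemma inv_letter_inv_letter [simp]: "inv_letter (inv_letter a) = a"
  by (simp add: inv_letter_def)

lemma inv_word_simps [simp]:
  "inv_word [] = []" "inv_word (a # w) = inv_word w @ [inv_letter a]"
  "inv_word (v @ w) = inv_word w @ inv_word v" "inv_word (inv_word w) = w"
  "length (inv_word w) = length w"
  by (auto simp: inv_word_def rev_map comp_def)

lemma pres_eq_in_context: "pres_eq R v w \<Longrightarrow> pres_eq R (a @ v @ b) (a @ w @ b)"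
proof (induction rule: pres_eq.induct)
  case (cancel u x v)
  show ?case using pres_eq.cancel[of R "a @ u" x "v @ b"] by simp
next
  case (relator r u v)
  show ?case using pres_eq.relator[OF relator, of "a @ u" "v @ b"] by simp
qed (auto intro: pres_eq.intros)

lemma pres_eq_append: "pres_eq R v v' \<Longrightarrow> pres_eq R w w' \<Longrightarrow> pres_eq R (v @ w) (v' @ w')"
  using pres_eq_in_context[of R v v' "[]" w] pres_eq_in_context[of R w w' v' "[]"]
  by (auto intro: pres_eq.trans)

lemma pres_eq_inv_word_right: "pres_eq R (w @ inv_word w) []"
proof (induction w)
  case (Cons a w)
  have "pres_eq R ([a] @ (w @ inv_word w) @ [inv_letter a]) ([a] @ [] @ [inv_letter a])"
    by (rule pres_eq_in_context[OF Cons.IH])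
  moreover have "pres_eq R ([] @ [a, inv_letter a] @ []) ([] @ [])"
    by (rule pres_eq.cancel)
  ultimately show ?case by (auto intro: pres_eq.trans)
qed (simp add: pres_eq.refl)

lemma pres_eq_inv_word_left: "pres_eq R (inv_word w @ w) []"
  using pres_eq_inv_word_right[of R "inv_word w"] by simp

lemma pres_class_eq_iff: "pres_class R v = pres_class R w \<longleftrightarrow> pres_eq R v w"
  unfolding pres_class_def by (auto intro: pres_eq.intros)

lemma pres_class_mult:
  "pres_class R v \<otimes>\<^bsub>presented_group R\<^esub> pres_class R w = pres_class R (v @ w)"
  unfolding presented_group_def pres_class_def
  by (auto intro: pres_eq.trans pres_eq_append pres_eq.refl pres_eq.sym)

lemma presented_group_carrier: "carrier (presented_group R) = range (pres_class R)"
  by (simp add: presented_group_def)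

lemma presented_group_one: "\<one>\<^bsub>presented_group R\<^esub> = pres_class R []"
  by (simp add: presented_group_def)

lemma group_presented_group: "group (presented_group R)"
proof (rule groupI)
  fix x assume "x \<in> carrier (presented_group R)"
  then obtain w where w: "x = pres_class R w" by (auto simp: presented_group_carrier)
  show "\<exists>y\<in>carrier (presented_group R). y \<otimes>\<^bsub>presented_group R\<^esub> x = \<one>\<^bsub>presented_group R\<^esub>"
    by (rule bexI[of _ "pres_class R (inv_word w)"])
       (auto simp: w presented_group_carrier pres_class_mult presented_group_one
         pres_class_eq_iff pres_eq_inv_word_left)
qed (auto simp: presented_group_carrier presented_group_one pres_class_mult)

lemma presented_group_inv:
  "inv\<^bsub>presented_group R\<^esub> (pres_class R w) = pres_class R (inv_word w)"
proof -
  interpret group "presented_group R" by (rule group_presented_group)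
  show ?thesis
    by (rule inv_equality) (auto simp: presented_group_carrier pres_class_mult presented_group_one
        pres_class_eq_iff pres_eq_inv_word_left)
qed

lemma pres_class_relator: "r \<in> R \<Longrightarrow> pres_class R r = \<one>\<^bsub>presented_group R\<^esub>"
  using pres_eq.relator[of r R "[]" "[]"] by (simp add: presented_group_one pres_class_eq_iff)

lemma pres_eq_even_length:
  assumes "\<forall>r\<in>R. even (length r)"
  shows "pres_eq R v w \<Longrightarrow> even (length v) = even (length w)"
  by (induction rule: pres_eq.induct) (use assms in auto)

lemma normal_presented_group_if_letters_normalize:
  assumes H: "subgroup H (presented_group R)"
    and letters: "\<And>a h. h \<in> H \<Longrightarrow>
      pres_class R [a] \<otimes>\<^bsub>presented_group R\<^esub> h \<otimes>\<^bsub>presented_group R\<^esub> inv\<^bsub>presented_group R\<^esub> (pres_class R [a]) \<in> H"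
  shows "H \<lhd> presented_group R"
proof -
  let ?G = "presented_group R"
  interpret group ?G by (rule group_presented_group)
  have "pres_class R w \<otimes>\<^bsub>?G\<^esub> h \<otimes>\<^bsub>?G\<^esub> inv\<^bsub>?G\<^esub> (pres_class R w) \<in> H" if "h \<in> H" for w h
    using that
  proof (induction w arbitrary: h)
    case Nil
    then show ?case using subgroup.mem_carrier[OF H] by (simp flip: presented_group_one)
  next
    case (Cons a w)
    have carrier: "pres_class R v \<in> carrier ?G" for v by (simp add: presented_group_carrier)
    have "pres_class R (a # w) = pres_class R [a] \<otimes>\<^bsub>?G\<^esub> pres_class R w"
      by (simp add: pres_class_mult)
    then have "pres_class R (a # w) \<otimes>\<^bsub>?G\<^esub> h \<otimes>\<^bsub>?G\<^esub> inv\<^bsub>?G\<^esub> (pres_class R (a # w))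
      = pres_class R [a] \<otimes>\<^bsub>?G\<^esub> (pres_class R w \<otimes>\<^bsub>?G\<^esub> h \<otimes>\<^bsub>?G\<^esub> inv\<^bsub>?G\<^esub> (pres_class R w))
        \<otimes>\<^bsub>?G\<^esub> inv\<^bsub>?G\<^esub> (pres_class R [a])"
      using carrier subgroup.mem_carrier[OF H Cons.prems] by (simp add: inv_mult_group m_assoc)
    also have "\<dots> \<in> H" using letters Cons by blast
    finally show ?case .
  qed
  then show ?thesis
    unfolding normal_inv_iff using H by (auto simp: presented_group_carrier)
qed

section \<open>Commutators and solvability\<close>

lemma (in group) conj_hom: "c \<in> carrier G \<Longrightarrow> (\<lambda>y. c \<otimes> y \<otimes> inv c) \<in> hom G G"
  by (rule homI) (simp_all add: m_assoc, simp add: m_assoc[symmetric])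

lemma (in group) conj_commutator:
  assumes "g \<in> carrier G" "a \<in> carrier G" "b \<in> carrier G"
  shows "g \<otimes> (a \<otimes> b \<otimes> inv a \<otimes> inv b) \<otimes> inv g
    = (g \<otimes> a \<otimes> inv g) \<otimes> (g \<otimes> b \<otimes> inv g) \<otimes> inv (g \<otimes> a \<otimes> inv g) \<otimes> inv (g \<otimes> b \<otimes> inv g)"
proof -
  interpret conj: group_hom G G "\<lambda>y. g \<otimes> y \<otimes> inv g"
    using conj_hom[OF assms(1)] by unfold_locales
  show ?thesis
    using assms
    by (simp add: conj.hom_inv[symmetric] conj.hom_mult[symmetric] del: conj.hom_mult conj.hom_inv)
qed

lemma (in group) conj_int_pow:
  assumes "c \<in> carrier G" "x \<in> carrier G"
  shows "c \<otimes> x [^] (n::int) \<otimes> inv c = (c \<otimes> x \<otimes> inv c) [^] n"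
  by (rule hom_int_pow[OF conj_hom[OF assms(1)] assms(2) is_group is_group])

lemma (in group) involution_inverts_int_pow:
  assumes r: "r \<in> carrier G" and s: "s \<in> carrier G" "s \<otimes> s = \<one>" "s \<otimes> r \<otimes> s = inv r"
    and c: "c \<in> carrier G"
  shows "s \<otimes> (r [^] (n::int) \<otimes> c) = r [^] (- n) \<otimes> (s \<otimes> c)"
proof -
  have inv_s: "inv s = s" using s by (simp add: inv_equality)
  have "s \<otimes> r [^] n \<otimes> s = inv r [^] n"
    using conj_int_pow[OF s(1) r, of n] by (simp add: inv_s s(3))
  also have "\<dots> = r [^] (- n)" using r by (simp add: int_pow_inv int_pow_neg)
  finally have "s \<otimes> r [^] n \<otimes> s \<otimes> (s \<otimes> c) = r [^] (- n) \<otimes> (s \<otimes> c)" by simp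
  moreover have "s \<otimes> r [^] n \<otimes> s \<otimes> (s \<otimes> c) = s \<otimes> (r [^] n \<otimes> c)"
    using r s c by (simp add: m_assoc[symmetric]) (simp add: m_assoc)
  ultimately show ?thesis by simp
qed

text \<open>By induction along the series, such a set lies in every term.\<close>
lemma (in group) commutator_closed_subset_trivial:
  assumes "solvable_seq G H" "T \<subseteq> H"
    and "\<forall>t\<in>T. \<exists>a\<in>T. \<exists>b\<in>T. t = a \<otimes> b \<otimes> inv a \<otimes> inv b"
  shows "T \<subseteq> {\<one>}"
  using assms(1,2)
proof (induction rule: solvable_seq.induct)
  case (extension K H)
  have "T \<subseteq> derived G H"
  proof
    fix t assume "t \<in> T"
    then obtain a b where "a \<in> T" "b \<in> T" "t = a \<otimes> b \<otimes> inv a \<otimes> inv b" using assms(3) by blast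
    then show "t \<in> derived G H"
      unfolding derived_def using extension.prems by (blast intro: generate.incl)
  qed
  then show ?case using derived_of_subgroup_minimal[OF extension.hyps(2-4)] extension.IH by blast
qed

lemma (in group_hom) not_solvable_if_commutator_of_conjugates:
  assumes t: "t \<in> carrier G" and u: "u \<in> carrier G" and v: "v \<in> carrier G"
    and nontrivial: "h t \<noteq> \<one>\<^bsub>H\<^esub>"
    and perfect: "h t = h ((u \<otimes> t \<otimes> inv u) \<otimes> (v \<otimes> t \<otimes> inv v)
                       \<otimes> inv (u \<otimes> t \<otimes> inv u) \<otimes> inv (v \<otimes> t \<otimes> inv v))"
  shows "\<not> solvable G"
proof
  let ?conj = "\<lambda>g x. g \<otimes> x \<otimes> inv g"
  let ?T = "(\<lambda>g. h (?conj g t)) ` carrier G"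
  assume "solvable G"
  then have "solvable_seq H (h ` carrier G)"
    by (simp add: solvable_def solvable_imp_solvable_img)
  moreover have "?T \<subseteq> h ` carrier G" using t by (auto simp del: hom_mult hom_inv)
  moreover have "\<forall>s\<in>?T. \<exists>a\<in>?T. \<exists>b\<in>?T. s = a \<otimes>\<^bsub>H\<^esub> b \<otimes>\<^bsub>H\<^esub> inv\<^bsub>H\<^esub> a \<otimes>\<^bsub>H\<^esub> inv\<^bsub>H\<^esub> b"
  proof
    fix s assume "s \<in> ?T"
    then obtain g where g: "g \<in> carrier G" and s: "s = h (?conj g t)" by blast
    have conj: "?conj g (?conj c t) = ?conj (g \<otimes> c) t" if "c \<in> carrier G" for c
      using g that t by (simp add: G.m_assoc G.inv_mult_group)
    let ?c = "(?conj u t) \<otimes> (?conj v t) \<otimes> inv (?conj u t) \<otimes> inv (?conj v t)"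
    have "s = h g \<otimes>\<^bsub>H\<^esub> h t \<otimes>\<^bsub>H\<^esub> inv\<^bsub>H\<^esub> (h g)"
      using g t by (simp add: s)
    also have "h t = h ?c" by (rule perfect)
    also have "h g \<otimes>\<^bsub>H\<^esub> h ?c \<otimes>\<^bsub>H\<^esub> inv\<^bsub>H\<^esub> (h g) = h (?conj g ?c)"
      using g t u v by simp
    also have "?conj g ?c = ?conj g (?conj u t) \<otimes> ?conj g (?conj v t) \<otimes> inv (?conj g (?conj u t)) \<otimes> inv (?conj g (?conj v t))"
      using t u v by (intro G.conj_commutator g) simp_all
    also have "h \<dots> = h (?conj (g \<otimes> u) t) \<otimes>\<^bsub>H\<^esub> h (?conj (g \<otimes> v) t)
        \<otimes>\<^bsub>H\<^esub> inv\<^bsub>H\<^esub> h (?conj (g \<otimes> u) t) \<otimes>\<^bsub>H\<^esub> inv\<^bsub>H\<^esub> h (?conj (g \<otimes> v) t)"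
      using g t u v by (simp only: conj hom_mult hom_inv G.m_closed G.inv_closed)
    finally show "\<exists>a\<in>?T. \<exists>b\<in>?T. s = a \<otimes>\<^bsub>H\<^esub> b \<otimes>\<^bsub>H\<^esub> inv\<^bsub>H\<^esub> a \<otimes>\<^bsub>H\<^esub> inv\<^bsub>H\<^esub> b"
      using g u v by blast
  qed
  ultimately have "?T \<subseteq> {\<one>\<^bsub>H\<^esub>}" by (rule H.commutator_closed_subset_trivial)
  moreover have "h t \<in> ?T"
    using t by (auto intro!: image_eqI[of _ _ "\<one>"])
  ultimately show False using nontrivial by blast
qed

lemma (in group) cyclic_Mod_if_generated:
  assumes H: "subgroup H G" and K: "K \<lhd> G\<lparr>carrier := H\<rparr>" and g: "g \<in> H"
    and gen: "\<forall>h\<in>H. \<exists>n::int. h \<otimes> inv (g [^] n) \<in> K"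
  shows "cyclic_group (G\<lparr>carrier := H\<rparr> Mod K)"
proof -
  let ?H = "G\<lparr>carrier := H\<rparr>"
  interpret H: group ?H using subgroup_imp_group[OF H] .
  interpret K: normal K ?H using K .
  interpret Q: group "?H Mod K" by (rule K.factorgroup_is_group)
  have hom: "(\<lambda>a. K #>\<^bsub>?H\<^esub> a) \<in> hom ?H (?H Mod K)" by (rule K.r_coset_hom_Mod)
  have gQ: "K #>\<^bsub>?H\<^esub> g \<in> carrier (?H Mod K)" using hom g by (auto simp: hom_def Pi_def)
  show ?thesis unfolding Q.cyclic_group
  proof (intro bexI[OF _ gQ] equalityI subsetI)
    fix C assume "C \<in> carrier (?H Mod K)"
    then obtain h where h: "h \<in> H" "C = K #>\<^bsub>?H\<^esub> h" by (auto simp: FactGroup_def RCOSETS_def)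
    obtain n :: int where n: "h \<otimes> inv (g [^] n) \<in> K" using gen h by blast
    have gn: "g [^] n \<in> H" using subgroup_int_pow_closed[OF H g] .
    have "h \<otimes>\<^bsub>?H\<^esub> inv\<^bsub>?H\<^esub> (g [^] n) \<in> K" using n gn H by simp
    then have "h \<in> K #>\<^bsub>?H\<^esub> (g [^] n)"
      by (intro subgroup.rcos_module_rev[OF K.subgroup_axioms H.is_group]) (use gn h in auto)
    then have "K #>\<^bsub>?H\<^esub> (g [^] n) = K #>\<^bsub>?H\<^esub> h"
      by (intro H.repr_independence K.subgroup_axioms) (use gn in auto)
    then have "C = K #>\<^bsub>?H\<^esub> (g [^]\<^bsub>?H\<^esub> n)" using h int_pow_consistent[OF H g] by simp
    also have "\<dots> = (K #>\<^bsub>?H\<^esub> g) [^]\<^bsub>?H Mod K\<^esub> n"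
      by (rule hom_int_pow[OF hom]) (use g in \<open>auto intro: H.is_group Q.is_group\<close>)
    finally show "C \<in> range (\<lambda>n::int. (K #>\<^bsub>?H\<^esub> g) [^]\<^bsub>?H Mod K\<^esub> n)" by blast
  qed (use gQ in auto)
qed

lemma (in group) polycyclic_seq_imp_solvable_seq: "polycyclic_seq G H \<Longrightarrow> solvable_seq G H"
proof (induction rule: polycyclic_seq.induct)
  case (extension K H)
  have "group (G\<lparr>carrier := H\<rparr> Mod K)" using extension.hyps(2) by (rule normal.factorgroup_is_group)
  then have "comm_group (G\<lparr>carrier := H\<rparr> Mod K)"
    using group.cyclic_imp_abelian_group extension.hyps(4) by blast
  then show ?case using solvable_seq.extension[OF extension.IH extension.hyps(2,3)] by blast
qed (rule solvable_seq.unity)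

section \<open>Actions of presented groups\<close>

definition eval_word :: "('g letter \<Rightarrow> 'a \<Rightarrow> 'a) \<Rightarrow> 'g letter list \<Rightarrow> 'a \<Rightarrow> 'a" where
  "eval_word f w = foldr (\<lambda>a g. f a \<circ> g) w id"

lemma eval_word_simps [simp]:
  "eval_word f [] = id" "eval_word f (a # w) = f a \<circ> eval_word f w"
  "eval_word f (v @ w) = eval_word f v \<circ> eval_word f w"
  by (induction v) (auto simp: eval_word_def)

lemma eval_word_replicate: "eval_word f (replicate n a) = f a ^^ n"
  by (induction n) (auto simp: funpow_Suc_right)

definition respects_inverses :: "('g letter \<Rightarrow> 'a \<Rightarrow> 'a) \<Rightarrow> bool" where
  "respects_inverses f \<longleftrightarrow> (\<forall>a x. f a (f (inv_letter a) x) = x)"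

lemma respects_inversesD: "respects_inverses f \<Longrightarrow> f a (f (inv_letter a) x) = x"
  unfolding respects_inverses_def by blast

lemma eval_word_inv_word:
  assumes "respects_inverses f"
  shows "eval_word f w \<circ> eval_word f (inv_word w) = id"
    and "eval_word f (inv_word w) \<circ> eval_word f w = id"
proof -
  show right: "eval_word f w \<circ> eval_word f (inv_word w) = id" for w
  proof (induction w)
    case (Cons a w)
    have "eval_word f (a # w) \<circ> eval_word f (inv_word (a # w))
        = f a \<circ> (eval_word f w \<circ> eval_word f (inv_word w)) \<circ> f (inv_letter a)"
      by (simp add: o_assoc)
    then show ?case using Cons.IH respects_inversesD[OF assms] by (simp add: fun_eq_iff)
  qed simp
  show "eval_word f (inv_word w) \<circ> eval_word f w = id"
    using right[of "inv_word w"] by simp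
qed

lemma eval_word_inv_word_apply:
  assumes "respects_inverses f"
  shows "eval_word f w (eval_word f (inv_word w) x) = x"
    and "eval_word f (inv_word w) (eval_word f w x) = x"
  using eval_word_inv_word[OF assms, of w] by (metis comp_apply id_apply)+

lemma bij_eval_word: "respects_inverses f \<Longrightarrow> bij (eval_word f w)"
  by (metis bij_betw_def eval_word_inv_word_apply inj_def surj_def)

lemma eval_word_pres_eq:
  assumes "respects_inverses f" and "\<forall>r\<in>R. eval_word f r = id"
  shows "pres_eq R v w \<Longrightarrow> eval_word f v = eval_word f w"
proof (induction rule: pres_eq.induct)
  case (cancel u a v)
  have "eval_word f (u @ [a, inv_letter a] @ v) = eval_word f u \<circ> (f a \<circ> f (inv_letter a)) \<circ> eval_word f v"
    by (simp add: comp_assoc)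
  then show ?case using respects_inversesD[OF assms(1)] by (simp add: fun_eq_iff)
qed (use assms(2) in auto)

definition presented_action :: "('g letter \<Rightarrow> 'a \<Rightarrow> 'a) \<Rightarrow> 'g letter list set \<Rightarrow> 'a \<Rightarrow> 'a" where
  "presented_action f C = eval_word f (SOME w. w \<in> C)"

lemma presented_action_pres_class:
  assumes "respects_inverses f" and "\<forall>r\<in>R. eval_word f r = id"
  shows "presented_action f (pres_class R w) = eval_word f w"
proof -
  have "pres_eq R w (SOME v. v \<in> pres_class R w)"
    using someI[of "\<lambda>v. v \<in> pres_class R w" w] by (simp add: pres_class_def pres_eq.refl)
  then show ?thesis
    unfolding presented_action_def using eval_word_pres_eq[OF assms] by simp
qed

lemma group_hom_presented_action:
  assumes "respects_inverses f" and "\<forall>r\<in>R. eval_word f r = id"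
  shows "group_hom (presented_group R) (BijGroup UNIV) (presented_action f)"
proof -
  have Bij: "eval_word f w \<in> Bij UNIV" for w
    using bij_eval_word[OF assms(1)] by (simp add: Bij_def)
  show ?thesis
  proof (intro group_hom.intro group_hom_axioms.intro group_presented_group group_BijGroup homI)
    fix C assume "C \<in> carrier (presented_group R)"
    then show "presented_action f C \<in> carrier (BijGroup UNIV)"
      by (auto simp: presented_group_carrier presented_action_pres_class[OF assms] BijGroup_def Bij)
  next
    fix C D assume "C \<in> carrier (presented_group R)" "D \<in> carrier (presented_group R)"
    then show "presented_action f (C \<otimes>\<^bsub>presented_group R\<^esub> D)
        = presented_action f C \<otimes>\<^bsub>BijGroup UNIV\<^esub> presented_action f D"
      by (auto simp: presented_group_carrier presented_action_pres_class[OF assms] pres_class_mult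
          BijGroup_def Bij compose_def restrict_UNIV)
  qed
qed

lemma eval_word_inv_word_eq_inv:
  "respects_inverses f \<Longrightarrow> eval_word f (inv_word w) = Hilbert_Choice.inv (eval_word f w)"
  using eval_word_inv_word by (metis inv_unique_comp)

definition conj_word :: "'g letter list \<Rightarrow> 'g letter list \<Rightarrow> 'g letter list" where
  "conj_word u t = u @ t @ inv_word u"

definition commutator_word :: "'g letter list \<Rightarrow> 'g letter list \<Rightarrow> 'g letter list" where
  "commutator_word a b = a @ b @ inv_word a @ inv_word b"

lemma presented_group_not_solvable:
  assumes f: "respects_inverses f" and rels: "\<forall>r\<in>R. eval_word f r = id"
    and nontrivial: "eval_word f t \<noteq> id"
    and perfect: "eval_word f t = eval_word f (commutator_word (conj_word u t) (conj_word v t))"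
  shows "\<not> solvable (presented_group R)"
proof -
  let ?G = "presented_group R" and ?c = "pres_class R"
  interpret group_hom ?G "BijGroup UNIV" "presented_action f"
    by (rule group_hom_presented_action[OF f rels])
  have comm: "?c (commutator_word (conj_word u t) (conj_word v t))
      = (?c u \<otimes>\<^bsub>?G\<^esub> ?c t \<otimes>\<^bsub>?G\<^esub> inv\<^bsub>?G\<^esub> ?c u) \<otimes>\<^bsub>?G\<^esub> (?c v \<otimes>\<^bsub>?G\<^esub> ?c t \<otimes>\<^bsub>?G\<^esub> inv\<^bsub>?G\<^esub> ?c v)
        \<otimes>\<^bsub>?G\<^esub> inv\<^bsub>?G\<^esub> (?c u \<otimes>\<^bsub>?G\<^esub> ?c t \<otimes>\<^bsub>?G\<^esub> inv\<^bsub>?G\<^esub> ?c u)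
        \<otimes>\<^bsub>?G\<^esub> inv\<^bsub>?G\<^esub> (?c v \<otimes>\<^bsub>?G\<^esub> ?c t \<otimes>\<^bsub>?G\<^esub> inv\<^bsub>?G\<^esub> ?c v)"
    by (simp add: presented_group_inv pres_class_mult commutator_word_def conj_word_def)
  have one: "\<one>\<^bsub>BijGroup UNIV\<^esub> = id" by (simp add: BijGroup_def id_def restrict_UNIV)
  show ?thesis
    by (rule not_solvable_if_commutator_of_conjugates[of "?c t" "?c u" "?c v"])
       (use nontrivial perfect in \<open>simp_all add: presented_group_carrier one comm[symmetric]
          presented_action_pres_class[OF f rels]\<close>)
qed

section \<open>Permutations\<close>

lemma bij_inv_cancel:
  assumes "bij f"
  shows "f (Hilbert_Choice.inv f q) = q" and "Hilbert_Choice.inv f (f q) = q"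
  using assms by (simp_all add: bij_is_surj surj_f_inv_f bij_is_inj inv_f_f)

lemma funpow_inv_cancel:
  fixes f :: "'a \<Rightarrow> 'a"
  shows "bij f \<Longrightarrow> (f ^^ n) ((Hilbert_Choice.inv f ^^ n) q) = q"
  by (induction n arbitrary: q) (simp, metis bij_inv_cancel(1) comp_apply funpow.simps(2) funpow_Suc_right)

definition cycle3 :: "'a \<Rightarrow> 'a \<Rightarrow> 'a \<Rightarrow> 'a \<Rightarrow> 'a" where
  "cycle3 a b c = (\<lambda>q. if q = a then b else if q = b then c else if q = c then a else q)"

lemma cycle3_moves: "distinct [a, b, c] \<Longrightarrow> cycle3 a b c q \<noteq> q \<longleftrightarrow> q \<in> {a, b, c}"
  by (auto simp: cycle3_def)

lemma inv_cycle3: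
  assumes "distinct [a, b, c]"
  shows "bij (cycle3 a b c)" and "Hilbert_Choice.inv (cycle3 a b c) = cycle3 c b a"
proof -
  have "cycle3 a b c \<circ> cycle3 c b a = id" "cycle3 c b a \<circ> cycle3 a b c = id"
    using assms by (auto simp: cycle3_def fun_eq_iff)
  then show "bij (cycle3 a b c)" "Hilbert_Choice.inv (cycle3 a b c) = cycle3 c b a"
    by (auto intro: o_bij inv_unique_comp)
qed

lemma conj_cycle3:
  "bij g \<Longrightarrow> g (cycle3 a b c (Hilbert_Choice.inv g q)) = cycle3 (g a) (g b) (g c) q"
  unfolding cycle3_def by (auto simp: bij_inv_eq_iff bij_is_inj inj_eq bij_is_surj surj_f_inv_f)

lemma bij_fixpoint_iff:
  assumes "bij \<sigma>"
  shows "Hilbert_Choice.inv \<sigma> q = q \<longleftrightarrow> \<sigma> q = q" and "\<sigma> (\<sigma> q) = \<sigma> q \<longleftrightarrow> \<sigma> q = q"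
  using assms by (metis bij_inv_eq_iff bij_is_inj inj_eq)+

text \<open>The only points moved by the commutator are \<open>p\<close> and its images: every other point moved
  by one of \<open>\<sigma>, \<tau>\<close> is fixed by the other.\<close>
lemma commutator_eq_cycle3:
  assumes \<sigma>: "bij \<sigma>" and \<tau>: "bij \<tau>" and meet: "\<And>q. \<sigma> q \<noteq> q \<and> \<tau> q \<noteq> q \<longleftrightarrow> q = p"
  shows "\<sigma> (\<tau> (Hilbert_Choice.inv \<sigma> (Hilbert_Choice.inv \<tau> q))) = cycle3 p (\<sigma> p) (\<tau> p) q"
proof -
  note s = bij_fixpoint_iff[OF \<sigma>] bij_inv_eq_iff[OF \<sigma>] and t = bij_fixpoint_iff[OF \<tau>] bij_inv_eq_iff[OF \<tau>]
  have "\<sigma> p \<noteq> p" "\<tau> p \<noteq> p" using meet by auto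
  moreover have "\<sigma> p \<noteq> \<tau> p"
    using meet[of "\<sigma> p"] s(2)[of p] t(2)[of p] \<open>\<sigma> p \<noteq> p\<close> by auto
  ultimately show ?thesis
    unfolding cycle3_def using meet s t by (smt (verit))
qed

lemma cycle3_word_perfect:
  assumes f: "respects_inverses f" and t: "eval_word f t = cycle3 p1 p2 p3"
    and p: "distinct [p1, p2, p3]"
    and u: "eval_word f u p1 = a1" "eval_word f u p2 = b1" "eval_word f u p3 = c1"
    and v: "eval_word f v p1 = a2" "eval_word f v p2 = b2" "eval_word f v p3 = c2"
    and meet: "\<And>q. q \<in> {a1, b1, c1} \<and> q \<in> {a2, b2, c2} \<longleftrightarrow> q = p"
    and result: "cycle3 p (cycle3 a1 b1 c1 p) (cycle3 a2 b2 c2 p) = cycle3 p1 p2 p3"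
  shows "eval_word f t \<noteq> id"
    and "eval_word f t = eval_word f (commutator_word (conj_word u t) (conj_word v t))"
proof -
  have conj: "eval_word f (conj_word w t) = cycle3 (eval_word f w p1) (eval_word f w p2) (eval_word f w p3)"
    for w
    using conj_cycle3[OF bij_eval_word[OF f]]
    by (simp add: fun_eq_iff conj_word_def t eval_word_inv_word_eq_inv[OF f])
  have distinct: "distinct [eval_word f w p1, eval_word f w p2, eval_word f w p3]" for w
    using p bij_eval_word[OF f, of w] by (simp add: bij_is_inj inj_eq)
  have "eval_word f (commutator_word (conj_word u t) (conj_word v t))
      = cycle3 p (cycle3 a1 b1 c1 p) (cycle3 a2 b2 c2 p)"
  proof
    fix q
    show "eval_word f (commutator_word (conj_word u t) (conj_word v t)) q
        = cycle3 p (cycle3 a1 b1 c1 p) (cycle3 a2 b2 c2 p) q"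
      using distinct[of u] distinct[of v] u v meet
      by (simp add: commutator_word_def eval_word_inv_word_eq_inv[OF f] conj inv_cycle3(1)
          commutator_eq_cycle3 cycle3_moves)
  qed
  then show "eval_word f t = eval_word f (commutator_word (conj_word u t) (conj_word v t))"
    using result t by simp
  show "eval_word f t \<noteq> id"
    using p by (auto simp: t cycle3_def fun_eq_iff)
qed

definition interval_cycle :: "nat \<Rightarrow> nat \<Rightarrow> nat \<Rightarrow> nat" where
  "interval_cycle s n q = (if s \<le> q \<and> q < s + n then (if q = s + n - 1 then s else Suc q) else q)"

lemma inv_interval_cycle:
  assumes "0 < n"
  shows "bij (interval_cycle s n)"
    and "Hilbert_Choice.inv (interval_cycle s n)
      = (\<lambda>q. if s \<le> q \<and> q < s + n then (if q = s then s + n - 1 else q - 1) else q)"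
proof -
  let ?back = "\<lambda>q. if s \<le> q \<and> q < s + n then (if q = s then s + n - 1 else q - 1) else q"
  have "interval_cycle s n \<circ> ?back = id" "?back \<circ> interval_cycle s n = id"
    using assms by (auto simp: interval_cycle_def fun_eq_iff)
  then show "bij (interval_cycle s n)" "Hilbert_Choice.inv (interval_cycle s n) = ?back"
    by (auto intro: o_bij inv_unique_comp)
qed

lemma interval_cycle_moves: "2 \<le> n \<Longrightarrow> interval_cycle s n q \<noteq> q \<longleftrightarrow> s \<le> q \<and> q < s + n"
  unfolding interval_cycle_def by auto

lemma interval_cycle_funpow_apply:
  assumes "0 < n"
  shows "(interval_cycle s n ^^ i) q = (if s \<le> q \<and> q < s + n then s + (q - s + i) mod n else q)"
proof (induction i)
  case (Suc i)
  show ?case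
  proof (cases "s \<le> q \<and> q < s + n")
    case True
    define r where "r = (q - s + i) mod n"
    have "r < n" using assms by (simp add: r_def)
    then have "interval_cycle s n (s + r) = s + (q - s + Suc i) mod n"
      using assms by (auto simp: interval_cycle_def r_def mod_Suc)
    then show ?thesis using Suc True by (simp add: r_def)
  next
    case False
    have "(interval_cycle s n ^^ i) q = q" using Suc False by simp
    moreover have "interval_cycle s n q = q" using False by (auto simp: interval_cycle_def)
    ultimately show ?thesis using False by auto
  qed
qed auto

lemma interval_cycle_funpow: "0 < n \<Longrightarrow> interval_cycle s n ^^ n = id"
proof
  fix q assume "0 < n"
  show "(interval_cycle s n ^^ n) q = id q"
  proof (cases "s \<le> q \<and> q < s + n")
    case True
    then obtain d where "q = s + d" "d < n" using le_Suc_ex by force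
    then show ?thesis using \<open>0 < n\<close> by (simp add: interval_cycle_funpow_apply)
  qed (use \<open>0 < n\<close> in \<open>auto simp add: interval_cycle_funpow_apply\<close>)
qed

definition double_transposition :: "'a \<Rightarrow> 'a \<Rightarrow> 'a \<Rightarrow> 'a \<Rightarrow> 'a \<Rightarrow> 'a" where
  "double_transposition a b c d q =
    (if q = a then b else if q = b then a else if q = c then d else if q = d then c else q)"

lemma inv_double_transposition:
  assumes "distinct [a, b, c, d]"
  shows "bij (double_transposition a b c d)"
    and "Hilbert_Choice.inv (double_transposition a b c d) = double_transposition a b c d"
    and "double_transposition a b c d ^^ 2 = id"
proof -
  have "double_transposition a b c d \<circ> double_transposition a b c d = id"
    using assms by (auto simp: double_transposition_def fun_eq_iff)
  then show "bij (double_transposition a b c d)"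
    "Hilbert_Choice.inv (double_transposition a b c d) = double_transposition a b c d"
    "double_transposition a b c d ^^ 2 = id"
    by (auto intro: o_bij inv_unique_comp simp: numeral_2_eq_2)
qed

section \<open>Actions of \<open>G\<^sub>j\<^sub>,\<^sub>k\<^sub>,\<^sub>l\<close>\<close>

fun letter_action :: "('a \<Rightarrow> 'a) \<Rightarrow> ('a \<Rightarrow> 'a) \<Rightarrow> ('a \<Rightarrow> 'a) \<Rightarrow> gen letter \<Rightarrow> 'a \<Rightarrow> 'a" where
  "letter_action x y z (GX, b) = (if b then Hilbert_Choice.inv x else x)"
| "letter_action x y z (GY, b) = (if b then Hilbert_Choice.inv y else y)"
| "letter_action x y z (GZ, b) = (if b then Hilbert_Choice.inv z else z)"

lemma respects_inverses_letter_action: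
  assumes "bij x" "bij y" "bij z"
  shows "respects_inverses (letter_action x y z)"
  unfolding respects_inverses_def
proof (intro allI)
  fix a :: "gen letter" and q
  obtain g b where "a = (g, b)" by (cases a)
  then show "letter_action x y z a (letter_action x y z (inv_letter a) q) = q"
    using assms by (cases g) (auto simp: inv_letter_def bij_inv_cancel)
qed

lemma letter_action_G_rels:
  assumes "bij z" "x ^^ j = id" "y ^^ k = id" "x \<circ> y = z ^^ l"
  shows "\<forall>r\<in>G_rels j k l. eval_word (letter_action x y z) r = id"
proof -
  have "(z ^^ l) ((Hilbert_Choice.inv z ^^ l) q) = q" for q
    using funpow_inv_cancel[OF assms(1)] .
  then have "x (y ((Hilbert_Choice.inv z ^^ l) q)) = q" for q
    using assms(4) by (metis comp_apply)
  then show ?thesis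
    using assms(2,3) by (auto simp: G_rels_def eval_word_replicate fun_eq_iff)
qed

lemma G_jkl_not_solvable:
  assumes "bij x" "bij y" "bij z" "x ^^ j = id" "y ^^ k = id" "x \<circ> y = z ^^ l"
    and "eval_word (letter_action x y z) t \<noteq> id"
    and "eval_word (letter_action x y z) t
      = eval_word (letter_action x y z) (commutator_word (conj_word u t) (conj_word v t))"
  shows "\<not> solvable (G_jkl j k l)"
  unfolding G_jkl_def
  by (rule presented_group_not_solvable[OF respects_inverses_letter_action letter_action_G_rels])
     (use assms in auto)

text \<open>Induced action: the action of \<open>x, y\<close> on \<open>'a\<close> is copied to the \<open>l\<close> sheets \<open>'a \<times> {0..<l}\<close>,
  and \<open>z\<close> moves each point to the next sheet, applying \<open>x y\<close> when it wraps around, so that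
  \<open>z\<^sup>l = x y\<close>. Points on sheets \<open>\<ge> l\<close> are fixed.\<close>
definition on_sheets :: "nat \<Rightarrow> ('a \<Rightarrow> 'a) \<Rightarrow> 'a \<times> nat \<Rightarrow> 'a \<times> nat" where
  "on_sheets l f = (\<lambda>(c, i). if i < l then (f c, i) else (c, i))"

definition sheet_shift :: "nat \<Rightarrow> ('a \<Rightarrow> 'a) \<Rightarrow> 'a \<times> nat \<Rightarrow> 'a \<times> nat" where
  "sheet_shift l g = (\<lambda>(c, i). if Suc i < l then (c, Suc i) else if Suc i = l then (g c, 0) else (c, i))"

lemma on_sheets_id [simp]: "on_sheets l id = id"
  by (auto simp: on_sheets_def fun_eq_iff)

lemma on_sheets_comp: "on_sheets l f (on_sheets l g p) = on_sheets l (\<lambda>c. f (g c)) p"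
  by (auto simp: on_sheets_def split: prod.splits)

lemma on_sheets_funpow: "on_sheets l f ^^ n = on_sheets l (f ^^ n)"
  by (induction n) (simp_all add: on_sheets_comp fun_eq_iff, simp add: on_sheets_def)

lemma on_sheets_eq_id_iff: "0 < l \<Longrightarrow> on_sheets l f = id \<longleftrightarrow> f = id"
  by (auto simp: on_sheets_def fun_eq_iff split: prod.splits)

lemma inv_on_sheets:
  assumes "bij f"
  shows "bij (on_sheets l f)" and "Hilbert_Choice.inv (on_sheets l f) = on_sheets l (Hilbert_Choice.inv f)"
proof -
  have "on_sheets l f \<circ> on_sheets l (Hilbert_Choice.inv f) = id"
    "on_sheets l (Hilbert_Choice.inv f) \<circ> on_sheets l f = id"
    using assms by (simp_all add: on_sheets_comp fun_eq_iff bij_inv_cancel, simp_all add: on_sheets_def)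
  then show "bij (on_sheets l f)" "Hilbert_Choice.inv (on_sheets l f) = on_sheets l (Hilbert_Choice.inv f)"
    by (auto intro: o_bij inv_unique_comp)
qed

lemma bij_sheet_shift:
  assumes "bij g"
  shows "bij (sheet_shift l g)"
proof (rule o_bij)
  let ?back = "\<lambda>(c, i). if 0 < i \<and> i < l then (c, i - 1)
    else if i = 0 \<and> 0 < l then (Hilbert_Choice.inv g c, l - 1) else (c, i)"
  show "sheet_shift l g \<circ> ?back = id" "?back \<circ> sheet_shift l g = id"
    using assms by (auto simp: sheet_shift_def fun_eq_iff bij_inv_cancel split: prod.splits)
qed

lemma sheet_shift_funpow_below:
  "i + n < l \<Longrightarrow> (sheet_shift l g ^^ n) (c, i) = (c, i + n)"
  by (induction n) (auto simp: sheet_shift_def)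

lemma sheet_shift_funpow: "sheet_shift l g ^^ l = on_sheets l g"
proof
  fix p :: "'a \<times> nat"
  obtain c i where p: "p = (c, i)" by (cases p)
  show "(sheet_shift l g ^^ l) p = on_sheets l g p"
  proof (cases "i < l")
    case True
    have l: "l = i + Suc (l - 1 - i)" using True by simp
    have "(sheet_shift l g ^^ l) (c, i)
        = (sheet_shift l g ^^ i) (sheet_shift l g ((sheet_shift l g ^^ (l - 1 - i)) (c, i)))"
      by (subst l, simp only: funpow_add funpow.simps(2) comp_apply)
    also have "(sheet_shift l g ^^ (l - 1 - i)) (c, i) = (c, l - 1)"
      using True sheet_shift_funpow_below[of i "l - 1 - i" l g c] by simp
    also have "sheet_shift l g (c, l - 1) = (g c, 0)"
      using True by (simp add: sheet_shift_def)
    also have "(sheet_shift l g ^^ i) (g c, 0) = (g c, i)"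
      using True sheet_shift_funpow_below[of 0 i l g] by simp
    finally show ?thesis using True by (simp add: p on_sheets_def)
  next
    case False
    then have "(sheet_shift l g ^^ n) (c, i) = (c, i)" for n
      by (induction n) (auto simp: sheet_shift_def)
    then show ?thesis using False by (simp add: p on_sheets_def)
  qed
qed

lemma eval_word_on_sheets:
  assumes "bij x" "bij y" and "\<forall>a\<in>set w. fst a \<noteq> GZ"
  shows "eval_word (letter_action (on_sheets l x) (on_sheets l y) z') w
    = on_sheets l (eval_word (letter_action x y z) w)"
  using assms(3)
proof (induction w)
  case (Cons a w)
  obtain g b where "a = (g, b)" by (cases a)
  with Cons show ?case
    using assms(1,2) by (cases g) (auto simp: inv_on_sheets on_sheets_comp fun_eq_iff)
qed simp

lemma G_jkl_not_solvable_induced: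
  assumes x: "bij x" "x ^^ j = id" and y: "bij y" "y ^^ k = id" and "0 < l"
    and z_free: "\<forall>a\<in>set t \<union> set u \<union> set v. fst a \<noteq> GZ"
    and "eval_word (letter_action x y id) t \<noteq> id"
    and "eval_word (letter_action x y id) t
      = eval_word (letter_action x y id) (commutator_word (conj_word u t) (conj_word v t))"
  shows "\<not> solvable (G_jkl j k l)"
proof (rule G_jkl_not_solvable)
  let ?z = "sheet_shift l (x \<circ> y)"
  let ?A = "letter_action (on_sheets l x) (on_sheets l y) ?z"
  have "\<forall>a\<in>set (commutator_word (conj_word u t) (conj_word v t)). fst a \<noteq> GZ"
    using z_free by (force simp: commutator_word_def conj_word_def inv_word_def inv_letter_def)
  then show "eval_word ?A t \<noteq> id"
    "eval_word ?A t = eval_word ?A (commutator_word (conj_word u t) (conj_word v t))"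
    using assms eval_word_on_sheets[OF x(1) y(1), of _ l ?z id]
    by (simp_all add: on_sheets_eq_id_iff)
  show "bij (on_sheets l x)" "bij (on_sheets l y)" "bij ?z"
    using x y by (simp_all add: inv_on_sheets bij_sheet_shift bij_comp)
  show "on_sheets l x ^^ j = id" "on_sheets l y ^^ k = id"
    using x y by (simp_all add: on_sheets_funpow)
  show "on_sheets l x \<circ> on_sheets l y = ?z ^^ l"
    by (simp add: fun_eq_iff on_sheets_comp sheet_shift_funpow comp_def)
qed

section \<open>The non-solvable cases\<close>

text \<open>The \<open>j\<close>-cycle \<open>x\<close> and the \<open>k\<close>-cycle \<open>y\<close> share exactly the point \<open>j - 1\<close>.\<close>
lemma not_solvable_G_jkl_if_j_ge_3:
  assumes j: "3 \<le> j" and k: "2 \<le> k" and jk: "3 \<le> k \<or> 4 \<le> j" and l: "0 < l"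
  shows "\<not> solvable (G_jkl j k l)"
proof -
  let ?x = "interval_cycle 0 j" and ?y = "interval_cycle (j - 1) k"
  let ?f = "letter_action ?x ?y id"
  have x: "bij ?x" and y: "bij ?y" using j k by (simp_all add: inv_interval_cycle)
  have f: "respects_inverses ?f" using x y by (simp add: respects_inverses_letter_action)
  define t where "t = [(GX, False), (GY, False), (GX, True), (GY, True)]"
  define u where "u = [(GX, True), (GY, False)]"
  define v where "v = [(GX, False)]"
  have "eval_word ?f t q = ?x (?y (Hilbert_Choice.inv ?x (Hilbert_Choice.inv ?y q)))" for q
    by (simp add: t_def)
  also have "\<dots> q = cycle3 (j - 1) (?x (j - 1)) (?y (j - 1)) q" for q
    by (rule commutator_eq_cycle3[OF x y]) (use j k in \<open>auto simp: interval_cycle_moves\<close>)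
  finally have "eval_word ?f t = cycle3 (j - 1) (?x (j - 1)) (?y (j - 1))" by auto
  also have "?x (j - 1) = 0" using j by (simp add: interval_cycle_def)
  also have "?y (j - 1) = j" using j k by (auto simp: interval_cycle_def)
  finally have T: "eval_word ?f t = cycle3 (j - 1) 0 j" .
  have p: "distinct [j - 1, 0, j]" using j by auto
  have U: "eval_word ?f u (j - 1) = j" "eval_word ?f u 0 = j - 1"
    and V: "eval_word ?f v (j - 1) = 0" "eval_word ?f v 0 = 1" "eval_word ?f v j = j"
    using j k by (auto simp: u_def v_def inv_interval_cycle interval_cycle_def)
  have "eval_word ?f u j \<notin> {0, 1}"
    using j jk k by (cases "3 \<le> k") (auto simp: u_def inv_interval_cycle interval_cycle_def)
  then have meet: "q \<in> {j, j - 1, eval_word ?f u j} \<and> q \<in> {0, 1, j} \<longleftrightarrow> q = j" for q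
    using j by auto
  have result: "cycle3 j (cycle3 j (j - 1) (eval_word ?f u j) j) (cycle3 0 1 j j) = cycle3 (j - 1) 0 j"
    using j by (auto simp: cycle3_def fun_eq_iff)
  note perfect = cycle3_word_perfect[OF f T p U HOL.refl V meet result]
  show ?thesis
    by (rule G_jkl_not_solvable_induced[OF x interval_cycle_funpow y interval_cycle_funpow l, of t u v])
       (use j k perfect in \<open>auto simp: t_def u_def v_def\<close>)
qed

lemma not_solvable_G_2kl_if_k_ge_4:
  assumes k: "4 \<le> k" and l: "0 < l"
  shows "\<not> solvable (G_jkl 2 k l)"
proof -
  let ?x = "interval_cycle 0 2" and ?y = "interval_cycle 1 k"
  let ?f = "letter_action ?x ?y id"
  have x: "bij ?x" and y: "bij ?y" using k by (simp_all add: inv_interval_cycle)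
  have f: "respects_inverses ?f" using x y by (simp add: respects_inverses_letter_action)
  define t where "t = [(GX, False), (GY, False), (GX, True), (GY, True)]"
  define u where "u = [(GY, True), (GX, False), (GY, False)]"
  define v where "v = [(GY, False)]"
  have "eval_word ?f t q = ?x (?y (Hilbert_Choice.inv ?x (Hilbert_Choice.inv ?y q)))" for q
    by (simp add: t_def)
  also have "\<dots> q = cycle3 1 (?x 1) (?y 1) q" for q
    by (rule commutator_eq_cycle3[OF x y]) (use k in \<open>auto simp: interval_cycle_moves\<close>)
  finally have "eval_word ?f t = cycle3 1 (?x 1) (?y 1)" by auto
  also have "?x 1 = 0" by (simp add: interval_cycle_def)
  also have "?y 1 = 2" using k by (auto simp: interval_cycle_def)
  finally have T: "eval_word ?f t = cycle3 1 0 2" .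
  have U: "eval_word ?f u 1 = 1" "eval_word ?f u 0 = k" "eval_word ?f u 2 = 2"
    and V: "eval_word ?f v 1 = 2" "eval_word ?f v 0 = 0" "eval_word ?f v 2 = 3"
    using k by (auto simp: u_def v_def inv_interval_cycle interval_cycle_def)
  have meet: "q \<in> {1, k, 2} \<and> q \<in> {2, 0, 3} \<longleftrightarrow> q = 2" for q
    using k by auto
  have result: "cycle3 2 (cycle3 1 k 2 2) (cycle3 2 0 3 2) = cycle3 (1::nat) 0 2"
    using k by (auto simp: cycle3_def fun_eq_iff)
  have p: "distinct [1, 0, 2 :: nat]" by simp
  note perfect = cycle3_word_perfect[OF f T p U V meet result]
  show ?thesis
    by (rule G_jkl_not_solvable_induced[OF x interval_cycle_funpow y interval_cycle_funpow l, of t u v])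
       (use k perfect in \<open>auto simp: t_def u_def v_def\<close>)
qed

text \<open>The remaining small cases act on five points through the alternating group \<open>A\<^sub>5\<close>, generated
  by the involution \<open>(0 1)(2 3)\<close> and the 3-cycle \<open>(0 2 4)\<close>.\<close>
definition a5_involution :: "nat \<Rightarrow> nat" where
  "a5_involution = double_transposition 0 1 2 3"

definition a5_cycle :: "nat \<Rightarrow> nat" where
  "a5_cycle = cycle3 0 2 4"

lemma a5_generators:
  shows "bij a5_involution" "Hilbert_Choice.inv a5_involution = a5_involution"
    and "a5_involution ^^ 2 = id"
    and "bij a5_cycle" "a5_cycle ^^ 3 = id" "Hilbert_Choice.inv a5_cycle = cycle3 4 2 0"
  unfolding a5_involution_def a5_cycle_def
  by (simp_all add: inv_double_transposition inv_cycle3)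
     (auto simp: fun_eq_iff numeral_3_eq_3 cycle3_def)

lemma a5_apply: "a5_involution q = double_transposition 0 1 2 3 q" "a5_cycle q = cycle3 0 2 4 q"
  by (simp_all add: a5_involution_def a5_cycle_def)

lemma a5_commutator:
  "a5_cycle (a5_involution (a5_cycle (a5_involution (Hilbert_Choice.inv a5_cycle
    (a5_involution (Hilbert_Choice.inv a5_cycle (a5_involution q))))))) = cycle3 0 1 4 q"
proof -
  have "q = 0 \<or> q = 1 \<or> q = 2 \<or> q = 3 \<or> q = 4 \<or> 5 \<le> q" by auto
  then show ?thesis
    by (elim disjE) (simp_all add: a5_generators a5_apply double_transposition_def cycle3_def)
qed

lemma a5_word_perfect:
  fixes f :: "gen letter \<Rightarrow> nat \<Rightarrow> nat"
  assumes f: "respects_inverses f" and t: "eval_word f t = cycle3 0 1 4"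
    and u: "\<And>q. eval_word f u q = a5_involution (Hilbert_Choice.inv a5_cycle q)"
    and v: "\<And>q. eval_word f v q = Hilbert_Choice.inv a5_cycle q"
  shows "eval_word f t \<noteq> id"
    and "eval_word f t = eval_word f (commutator_word (conj_word u t) (conj_word v t))"
proof -
  have U: "eval_word f u 0 = 4" "eval_word f u 1 = 0" "eval_word f u 4 = 3"
    and V: "eval_word f v 0 = 4" "eval_word f v 1 = 1" "eval_word f v 4 = 2"
    by (simp_all add: u v a5_generators a5_apply double_transposition_def cycle3_def)
  have meet: "q \<in> {4, 0, 3} \<and> q \<in> {4, 1, 2} \<longleftrightarrow> q = (4::nat)" for q
    by auto
  have result: "cycle3 4 (cycle3 4 0 3 4) (cycle3 4 1 2 4) = cycle3 (0::nat) 1 4"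
    by (auto simp: cycle3_def fun_eq_iff)
  show "eval_word f t \<noteq> id"
    and "eval_word f t = eval_word f (commutator_word (conj_word u t) (conj_word v t))"
    using cycle3_word_perfect[OF f t _ U V meet result] by simp_all
qed

lemma not_solvable_G_23l:
  assumes l: "0 < l"
  shows "\<not> solvable (G_jkl 2 3 l)"
proof -
  let ?f = "letter_action a5_involution a5_cycle id"
  define t where "t = [(GY, False), (GX, False), (GY, False), (GX, False),
    (GY, True), (GX, True), (GY, True), (GX, True)]"
  define u where "u = [(GX, False), (GY, True)]"
  define v where "v = [(GY, True)]"
  have f: "respects_inverses ?f"
    using a5_generators by (simp add: respects_inverses_letter_action)
  have "eval_word ?f t = cycle3 0 1 4"
    using a5_commutator by (simp add: t_def a5_generators fun_eq_iff)
  from a5_word_perfect[OF f this, of u v] have perfect: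
    "eval_word ?f t \<noteq> id" "eval_word ?f t = eval_word ?f (commutator_word (conj_word u t) (conj_word v t))"
    by (simp_all add: u_def v_def)
  show ?thesis
    by (rule G_jkl_not_solvable_induced[OF a5_generators(1,3,4,5) l _ perfect])
       (auto simp: t_def u_def v_def)
qed

lemma not_solvable_G_32l:
  assumes l: "0 < l"
  shows "\<not> solvable (G_jkl 3 2 l)"
proof -
  let ?f = "letter_action a5_cycle a5_involution id"
  define t where "t = [(GX, False), (GY, False), (GX, False), (GY, False),
    (GX, True), (GY, True), (GX, True), (GY, True)]"
  define u where "u = [(GY, False), (GX, True)]"
  define v where "v = [(GX, True)]"
  have f: "respects_inverses ?f"
    using a5_generators by (simp add: respects_inverses_letter_action)
  have "eval_word ?f t = cycle3 0 1 4"
    using a5_commutator by (simp add: t_def a5_generators fun_eq_iff)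
  from a5_word_perfect[OF f this, of u v] have perfect:
    "eval_word ?f t \<noteq> id" "eval_word ?f t = eval_word ?f (commutator_word (conj_word u t) (conj_word v t))"
    by (simp_all add: u_def v_def a5_generators)
  show ?thesis
    by (rule G_jkl_not_solvable_induced[OF a5_generators(4,5,1,3) l _ perfect])
       (auto simp: t_def u_def v_def)
qed

lemma not_solvable_G_223: "\<not> solvable (G_jkl 2 2 3)"
proof -
  let ?f = "letter_action a5_involution a5_involution a5_cycle"
  define t where "t = [(GZ, False), (GX, False), (GZ, False), (GX, False),
    (GZ, True), (GX, True), (GZ, True), (GX, True)]"
  define u where "u = [(GX, False), (GZ, True)]"
  define v where "v = [(GZ, True)]"
  have f: "respects_inverses ?f"
    using a5_generators by (simp add: respects_inverses_letter_action)
  have "eval_word ?f t = cycle3 0 1 4"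
    using a5_commutator by (simp add: t_def a5_generators fun_eq_iff)
  from a5_word_perfect[OF f this, of u v] have perfect:
    "eval_word ?f t \<noteq> id" "eval_word ?f t = eval_word ?f (commutator_word (conj_word u t) (conj_word v t))"
    by (simp_all add: u_def v_def)
  have "a5_involution \<circ> a5_involution = a5_cycle ^^ 3"
    using a5_generators by (simp add: numeral_2_eq_2)
  then show ?thesis
    by (rule G_jkl_not_solvable[OF a5_generators(1,1,4,3,3) _ perfect])
qed

lemma not_solvable_G_22l_if_l_ge_4:
  assumes l: "4 \<le> l"
  shows "\<not> solvable (G_jkl 2 2 l)"
proof -
  let ?x = "double_transposition (l - 1) l (l + 1) (l + 2)" and ?z = "interval_cycle 0 l"
  let ?f = "letter_action ?x ?x ?z"
  have "distinct [l - 1, l, l + 1, l + 2]" using l by auto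
  note x = inv_double_transposition[OF this]
  have z: "bij ?z" using l by (simp add: inv_interval_cycle)
  have f: "respects_inverses ?f" using x z by (simp add: respects_inverses_letter_action)
  define t where "t = [(GX, False), (GZ, False), (GX, True), (GZ, True)]"
  define u where "u = [(GZ, False), (GX, False)]"
  define v where "v = [(GZ, True)]"
  have "eval_word ?f t q = ?x (?z (Hilbert_Choice.inv ?x (Hilbert_Choice.inv ?z q)))" for q
    by (simp add: t_def)
  also have "\<dots> q = cycle3 (l - 1) (?x (l - 1)) (?z (l - 1)) q" for q
    by (rule commutator_eq_cycle3[OF x(1) z])
       (use l in \<open>auto simp: interval_cycle_moves double_transposition_def\<close>)
  finally have "eval_word ?f t = cycle3 (l - 1) (?x (l - 1)) (?z (l - 1))" by auto
  also have "?x (l - 1) = l" by (simp add: double_transposition_def)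
  also have "?z (l - 1) = 0" using l by (simp add: interval_cycle_def)
  finally have T: "eval_word ?f t = cycle3 (l - 1) l 0" .
  have U: "eval_word ?f u (l - 1) = l" "eval_word ?f u l = 0" "eval_word ?f u 0 = 1"
    and V: "eval_word ?f v (l - 1) = l - 2" "eval_word ?f v l = l" "eval_word ?f v 0 = l - 1"
    using l by (auto simp: u_def v_def inv_interval_cycle interval_cycle_def double_transposition_def)
  have meet: "q \<in> {l, 0, 1} \<and> q \<in> {l - 2, l, l - 1} \<longleftrightarrow> q = l" for q
    using l by auto
  have result: "cycle3 l (cycle3 l 0 1 l) (cycle3 (l - 2) l (l - 1) l) = cycle3 (l - 1) l 0"
    using l by (auto simp: cycle3_def fun_eq_iff)
  have p: "distinct [l - 1, l, 0]" using l by auto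
  note perfect = cycle3_word_perfect[OF f T p U V meet result]
  have "?x \<circ> ?x = ?z ^^ l"
    using x l by (simp add: interval_cycle_funpow numeral_2_eq_2)
  then show ?thesis
    by (rule G_jkl_not_solvable[OF x(1) x(1) z x(3) x(3) _ perfect])
qed

section \<open>\<open>G\<^sub>2\<^sub>,\<^sub>2\<^sub>,\<^sub>2\<close> is polycyclic\<close>

abbreviation G222 :: "gen letter list set monoid" where
  "G222 \<equiv> G_jkl 2 2 2"

abbreviation cls :: "gen letter list \<Rightarrow> gen letter list set" where
  "cls \<equiv> pres_class (G_rels 2 2 2)"

interpretation G222: group G222
  unfolding G_jkl_def by (rule group_presented_group)

lemma G222_classes:
  "carrier G222 = range cls" "cls v \<otimes>\<^bsub>G222\<^esub> cls w = cls (v @ w)" "\<one>\<^bsub>G222\<^esub> = cls []"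
  "inv\<^bsub>G222\<^esub> (cls w) = cls (inv_word w)"
  unfolding G_jkl_def
  by (simp_all add: presented_group_carrier pres_class_mult presented_group_one presented_group_inv)

lemma cls_in_carrier [simp]: "cls w \<in> carrier G222"
  by (simp add: G222_classes)

abbreviation gx :: "gen letter list set" where "gx \<equiv> cls [(GX, False)]"
abbreviation gy :: "gen letter list set" where "gy \<equiv> cls [(GY, False)]"
abbreviation gz :: "gen letter list set" where "gz \<equiv> cls [(GZ, False)]"

lemma G222_relations:
  "gx \<otimes>\<^bsub>G222\<^esub> gx = \<one>\<^bsub>G222\<^esub>" "gy \<otimes>\<^bsub>G222\<^esub> gy = \<one>\<^bsub>G222\<^esub>" "gx \<otimes>\<^bsub>G222\<^esub> gy = gz \<otimes>\<^bsub>G222\<^esub> gz"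
proof -
  have rel: "cls r = \<one>\<^bsub>G222\<^esub>" if "r \<in> G_rels 2 2 2" for r
    using pres_class_relator[OF that] by (simp add: G_jkl_def)
  have two: "replicate 2 a = [a, a]" for a :: "gen letter"
    by (simp add: numeral_2_eq_2)
  have "[(GX, False), (GX, False)] \<in> G_rels 2 2 2" "[(GY, False), (GY, False)] \<in> G_rels 2 2 2"
    "[(GX, False), (GY, False)] @ [(GZ, True), (GZ, True)] \<in> G_rels 2 2 2"
    by (simp_all add: G_rels_def two)
  note rels = this[THEN rel]
  show "gx \<otimes>\<^bsub>G222\<^esub> gx = \<one>\<^bsub>G222\<^esub>" "gy \<otimes>\<^bsub>G222\<^esub> gy = \<one>\<^bsub>G222\<^esub>"
    using rels(1,2) by (simp_all add: G222_classes)
  have "gx \<otimes>\<^bsub>G222\<^esub> gy \<otimes>\<^bsub>G222\<^esub> inv\<^bsub>G222\<^esub> (gz \<otimes>\<^bsub>G222\<^esub> gz) = \<one>\<^bsub>G222\<^esub>"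
    using rels(3) by (simp add: G222_classes inv_letter_def)
  then have "inv\<^bsub>G222\<^esub> (inv\<^bsub>G222\<^esub> (gz \<otimes>\<^bsub>G222\<^esub> gz)) = gx \<otimes>\<^bsub>G222\<^esub> gy"
    by (intro G222.inv_equality) simp_all
  then show "gx \<otimes>\<^bsub>G222\<^esub> gy = gz \<otimes>\<^bsub>G222\<^esub> gz" by simp
qed

lemma G222_letter_classes:
  "cls [(GX, True)] = gx" "cls [(GY, True)] = gy" "cls [(GZ, True)] = inv\<^bsub>G222\<^esub> gz"
  and G222_inv_gx: "inv\<^bsub>G222\<^esub> gx = gx" and G222_inv_gy: "inv\<^bsub>G222\<^esub> gy = gy"
proof -
  show gx: "inv\<^bsub>G222\<^esub> gx = gx" and gy: "inv\<^bsub>G222\<^esub> gy = gy"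
    using G222_relations by (simp_all add: G222.inv_equality)
  show "cls [(GX, True)] = gx" "cls [(GY, True)] = gy" "cls [(GZ, True)] = inv\<^bsub>G222\<^esub> gz"
    using gx gy by (simp_all add: G222_classes inv_letter_def)
qed

definition even_classes :: "gen letter list set set" where
  "even_classes = {cls w |w. even (length w)}"

lemma cls_in_even_classes_iff: "cls w \<in> even_classes \<longleftrightarrow> even (length w)"
proof -
  have "cls v = cls w \<Longrightarrow> even (length v) = even (length w)" for v w
    by (rule pres_eq_even_length[of "G_rels 2 2 2"]) (auto simp: G_rels_def pres_class_eq_iff)
  then show ?thesis unfolding even_classes_def by blast
qed

lemma even_classes_normal: "even_classes \<lhd> G222"
proof -
  have "subgroup even_classes G222"
  proof (rule G222.subgroupI)
    show "even_classes \<subseteq> carrier G222" "even_classes \<noteq> {}"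
      using cls_in_even_classes_iff[of "[]"] by (auto simp: even_classes_def)
  qed (auto simp: even_classes_def G222_classes cls_in_even_classes_iff)
  then show ?thesis
    unfolding G222.normal_inv_iff
    by (auto simp: even_classes_def G222_classes cls_in_even_classes_iff)
qed

abbreviation zsq :: "gen letter list set" where "zsq \<equiv> gz \<otimes>\<^bsub>G222\<^esub> gz"

definition zsq_powers :: "gen letter list set set" where
  "zsq_powers = range (\<lambda>n::int. zsq [^]\<^bsub>G222\<^esub> n)"

lemma zsq_in_zsq_powers: "zsq \<in> zsq_powers"
  unfolding zsq_powers_def using G222.int_pow_1[of zsq] by (metis cls_in_carrier G222.m_closed rangeI)

lemma zsq_powers_subgroup: "subgroup zsq_powers G222"
proof (rule G222.subgroupI)
  fix a b assume "a \<in> zsq_powers" "b \<in> zsq_powers"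
  then obtain m n :: int where "a = zsq [^]\<^bsub>G222\<^esub> m" "b = zsq [^]\<^bsub>G222\<^esub> n"
    by (auto simp: zsq_powers_def)
  then have "inv\<^bsub>G222\<^esub> a = zsq [^]\<^bsub>G222\<^esub> (- m)" "a \<otimes>\<^bsub>G222\<^esub> b = zsq [^]\<^bsub>G222\<^esub> (m + n)"
    by (simp_all add: G222.int_pow_neg G222.int_pow_mult)
  then show "inv\<^bsub>G222\<^esub> a \<in> zsq_powers" "a \<otimes>\<^bsub>G222\<^esub> b \<in> zsq_powers"
    by (simp_all add: zsq_powers_def)
qed (auto simp: zsq_powers_def)

lemma zsq_powers_subset_even_classes: "zsq_powers \<subseteq> even_classes"
proof -
  have "zsq \<in> even_classes" using cls_in_even_classes_iff[of "[(GZ, False), (GZ, False)]"]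
    by (simp add: G222_classes)
  then show ?thesis
    using G222.subgroup_int_pow_closed[OF normal_imp_subgroup[OF even_classes_normal]]
    by (auto simp: zsq_powers_def)
qed

text \<open>Conjugation by \<open>x\<close> or \<open>y\<close> inverts \<open>z\<^sup>2 = x y\<close>, and \<open>z\<close> commutes with it.\<close>
lemma conj_zsq_letter:
  "cls [a] \<otimes>\<^bsub>G222\<^esub> zsq \<otimes>\<^bsub>G222\<^esub> inv\<^bsub>G222\<^esub> (cls [a]) \<in> {zsq, inv\<^bsub>G222\<^esub> zsq}"
proof -
  have inv_zsq: "inv\<^bsub>G222\<^esub> zsq = gy \<otimes>\<^bsub>G222\<^esub> gx"
    using G222.inv_mult_group[of gx gy] by (simp add: G222_relations(3) G222_inv_gx G222_inv_gy)
  have x: "gx \<otimes>\<^bsub>G222\<^esub> zsq \<otimes>\<^bsub>G222\<^esub> inv\<^bsub>G222\<^esub> gx = inv\<^bsub>G222\<^esub> zsq"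
    unfolding inv_zsq G222_inv_gx unfolding G222_relations(3)[symmetric]
    by (simp add: G222.m_assoc[symmetric] G222_relations(1))
  have y: "gy \<otimes>\<^bsub>G222\<^esub> zsq \<otimes>\<^bsub>G222\<^esub> inv\<^bsub>G222\<^esub> gy = inv\<^bsub>G222\<^esub> zsq"
    unfolding inv_zsq G222_inv_gy unfolding G222_relations(3)[symmetric]
    by (simp add: G222.m_assoc G222_relations(2))
  obtain g b where "a = (g, b)" by (cases a)
  then show ?thesis
    using x y G222_letter_classes
    by (cases g; cases b) (simp_all add: G222.m_assoc, simp_all add: G222.m_assoc[symmetric])
qed

lemma zsq_powers_normal: "zsq_powers \<lhd> G222"
  unfolding G_jkl_def
proof (rule normal_presented_group_if_letters_normalize)
  show "subgroup zsq_powers (presented_group (G_rels 2 2 2))"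
    using zsq_powers_subgroup by (simp add: G_jkl_def)
next
  fix a h assume "h \<in> zsq_powers"
  then obtain n :: int where h: "h = zsq [^]\<^bsub>G222\<^esub> n" by (auto simp: zsq_powers_def)
  have "cls [a] \<otimes>\<^bsub>G222\<^esub> h \<otimes>\<^bsub>G222\<^esub> inv\<^bsub>G222\<^esub> (cls [a])
      = (cls [a] \<otimes>\<^bsub>G222\<^esub> zsq \<otimes>\<^bsub>G222\<^esub> inv\<^bsub>G222\<^esub> (cls [a])) [^]\<^bsub>G222\<^esub> n"
    unfolding h by (rule G222.conj_int_pow) simp_all
  moreover have "zsq [^]\<^bsub>G222\<^esub> n \<in> zsq_powers" "(inv\<^bsub>G222\<^esub> zsq) [^]\<^bsub>G222\<^esub> n \<in> zsq_powers"
    by (auto simp: zsq_powers_def G222.int_pow_inv G222.int_pow_neg[symmetric])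
  ultimately show "cls [a] \<otimes>\<^bsub>presented_group (G_rels 2 2 2)\<^esub> h
      \<otimes>\<^bsub>presented_group (G_rels 2 2 2)\<^esub> inv\<^bsub>presented_group (G_rels 2 2 2)\<^esub> (cls [a]) \<in> zsq_powers"
    using conj_zsq_letter[of a] by (auto simp: G_jkl_def)
qed

declare one_FactGroup [simp del] mult_FactGroup [simp del]

abbreviation Q222 :: "gen letter list set set monoid" where "Q222 \<equiv> G222 Mod zsq_powers"

abbreviation proj :: "gen letter list set \<Rightarrow> gen letter list set set" where "proj a \<equiv> zsq_powers #>\<^bsub>G222\<^esub> a"

interpretation zsq_powers: normal zsq_powers G222
  by (rule zsq_powers_normal)

interpretation Q222: group Q222
  by (rule zsq_powers.factorgroup_is_group)

interpretation proj: group_hom G222 Q222 proj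
  by (intro group_hom.intro group_hom_axioms.intro G222.is_group Q222.is_group
      zsq_powers.r_coset_hom_Mod)

abbreviation \<rho> :: "gen letter list set set" where "\<rho> \<equiv> proj (gx \<otimes>\<^bsub>G222\<^esub> gz)"

abbreviation \<zeta> :: "gen letter list set set" where "\<zeta> \<equiv> proj gz"

abbreviation \<xi> :: "gen letter list set set" where "\<xi> \<equiv> proj gx"

lemma proj_zsq_powers: "h \<in> zsq_powers \<Longrightarrow> proj h = \<one>\<^bsub>Q222\<^esub>"
  using G222.coset_join2[OF subgroup.mem_carrier[OF zsq_powers_subgroup] zsq_powers_subgroup]
  by (simp add: FactGroup_def)

lemma proj_eq_imp:
  assumes "a \<in> carrier G222" "b \<in> carrier G222" "proj a = proj b"
  shows "a \<otimes>\<^bsub>G222\<^esub> inv\<^bsub>G222\<^esub> b \<in> zsq_powers"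
proof -
  have "a \<in> proj b" using G222.rcos_self[OF assms(1) zsq_powers_subgroup] assms(3) by simp
  then show ?thesis by (rule subgroup.rcos_module_imp[OF zsq_powers_subgroup G222.is_group assms(2)])
qed

lemma Q222_relations:
  "\<zeta> \<otimes>\<^bsub>Q222\<^esub> \<zeta> = \<one>\<^bsub>Q222\<^esub>" "\<xi> = \<rho> \<otimes>\<^bsub>Q222\<^esub> \<zeta>"
  "\<zeta> \<otimes>\<^bsub>Q222\<^esub> \<rho> \<otimes>\<^bsub>Q222\<^esub> \<zeta> = inv\<^bsub>Q222\<^esub> \<rho>"
proof -
  show z: "\<zeta> \<otimes>\<^bsub>Q222\<^esub> \<zeta> = \<one>\<^bsub>Q222\<^esub>"
    using proj.hom_mult[of gz gz] proj_zsq_powers[OF zsq_in_zsq_powers] by simp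
  have x: "\<xi> \<otimes>\<^bsub>Q222\<^esub> \<xi> = \<one>\<^bsub>Q222\<^esub>"
    using proj.hom_mult[of gx gx] G222_relations(1) by simp
  have r: "\<rho> = \<xi> \<otimes>\<^bsub>Q222\<^esub> \<zeta>" by simp
  show "\<xi> = \<rho> \<otimes>\<^bsub>Q222\<^esub> \<zeta>" by (simp add: r Q222.m_assoc z)
  have "\<zeta> \<otimes>\<^bsub>Q222\<^esub> \<xi> \<otimes>\<^bsub>Q222\<^esub> (\<xi> \<otimes>\<^bsub>Q222\<^esub> \<zeta>) = \<zeta> \<otimes>\<^bsub>Q222\<^esub> (\<xi> \<otimes>\<^bsub>Q222\<^esub> \<xi>) \<otimes>\<^bsub>Q222\<^esub> \<zeta>"
    by (simp add: Q222.m_assoc)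
  then have "inv\<^bsub>Q222\<^esub> \<rho> = \<zeta> \<otimes>\<^bsub>Q222\<^esub> \<xi>"
    using x z by (simp add: r Q222.inv_equality)
  then show "\<zeta> \<otimes>\<^bsub>Q222\<^esub> \<rho> \<otimes>\<^bsub>Q222\<^esub> \<zeta> = inv\<^bsub>Q222\<^esub> \<rho>"
    by (simp add: r Q222.m_assoc z)
qed

lemma proj_letter: "proj (cls [a]) \<in> {\<zeta>, \<rho> \<otimes>\<^bsub>Q222\<^esub> \<zeta>}"
proof -
  have "gy = gx \<otimes>\<^bsub>G222\<^esub> zsq"
    using G222_relations by (simp flip: G222_relations(3) add: G222.m_assoc[symmetric])
  then have y: "proj gy = \<xi>"
    using proj.hom_mult[of gx zsq] proj_zsq_powers[OF zsq_in_zsq_powers] by simp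
  have z: "proj (inv\<^bsub>G222\<^esub> gz) = \<zeta>"
    using proj.hom_inv[of gz] Q222.inv_equality[OF Q222_relations(1)] by simp
  have "\<xi> \<in> {\<zeta>, \<rho> \<otimes>\<^bsub>Q222\<^esub> \<zeta>}" "\<zeta> \<in> {\<zeta>, \<rho> \<otimes>\<^bsub>Q222\<^esub> \<zeta>}"
    using Q222_relations(2) by blast+
  moreover obtain g b where "a = (g, b)" by (cases a)
  ultimately show ?thesis
    using y z by (cases g; cases b) (simp_all only: G222_letter_classes)
qed

text \<open>The quotient is infinite dihedral: every letter maps to \<open>\<zeta>\<close> or \<open>\<rho> \<zeta>\<close>, and \<open>\<zeta>\<close> inverts
  \<open>\<rho>\<close>, so each letter flips the \<open>\<zeta>\<close>-part.\<close>
lemma Q222_normal_form: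
  "\<exists>n::int. proj (cls w) = \<rho> [^]\<^bsub>Q222\<^esub> n \<otimes>\<^bsub>Q222\<^esub> (if odd (length w) then \<zeta> else \<one>\<^bsub>Q222\<^esub>)"
proof (induction w)
  case Nil
  show ?case using proj.hom_one by (intro exI[of _ 0]) (simp add: G222_classes)
next
  case (Cons a w)
  then obtain n :: int
    where n: "proj (cls w) = \<rho> [^]\<^bsub>Q222\<^esub> n \<otimes>\<^bsub>Q222\<^esub> (if odd (length w) then \<zeta> else \<one>\<^bsub>Q222\<^esub>)"
    by blast
  let ?parity = "\<lambda>w. if odd (length w) then \<zeta> else \<one>\<^bsub>Q222\<^esub>"
  have zeta: "\<zeta> \<in> carrier Q222" and rho: "\<rho> \<in> carrier Q222"
    by (simp_all only: proj.hom_closed cls_in_carrier G222.m_closed)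
  have parity: "?parity w \<in> carrier Q222" "\<zeta> \<otimes>\<^bsub>Q222\<^esub> ?parity w = ?parity (a # w)"
    "?parity (a # w) \<in> carrier Q222"
    by (cases "odd (length w)"; simp add: zeta Q222_relations(1))+
  have flip: "\<zeta> \<otimes>\<^bsub>Q222\<^esub> proj (cls w) = \<rho> [^]\<^bsub>Q222\<^esub> (- n) \<otimes>\<^bsub>Q222\<^esub> ?parity (a # w)"
    unfolding n parity(2)[symmetric]
    by (rule Q222.involution_inverts_int_pow[OF rho zeta Q222_relations(1,3) parity(1)])
  have split: "proj (cls (a # w)) = proj (cls [a]) \<otimes>\<^bsub>Q222\<^esub> proj (cls w)"
    using proj.hom_mult[of "cls [a]" "cls w"] by (simp add: G222_classes)
  show ?case
  proof (cases "proj (cls [a]) = \<zeta>")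
    case True
    then show ?thesis using split flip by auto
  next
    case False
    have w: "proj (cls w) \<in> carrier Q222" by (simp only: proj.hom_closed cls_in_carrier)
    have "proj (cls (a # w)) = \<rho> \<otimes>\<^bsub>Q222\<^esub> \<zeta> \<otimes>\<^bsub>Q222\<^esub> proj (cls w)"
      using proj_letter[of a] False split by simp
    also have "\<dots> = \<rho> [^]\<^bsub>Q222\<^esub> (1::int) \<otimes>\<^bsub>Q222\<^esub> (\<rho> [^]\<^bsub>Q222\<^esub> (- n) \<otimes>\<^bsub>Q222\<^esub> ?parity (a # w))"
      by (simp only: Q222.m_assoc[OF rho zeta w] flip Q222.int_pow_1[OF rho])
    also have "\<dots> = \<rho> [^]\<^bsub>Q222\<^esub> (1 + - n) \<otimes>\<^bsub>Q222\<^esub> ?parity (a # w)"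
      by (simp only: Q222.m_assoc[symmetric] Q222.int_pow_closed[OF rho] parity(3)
          Q222.int_pow_mult[OF rho])
    finally show ?thesis by blast
  qed
qed

lemma even_classes_mod_zsq_powers:
  assumes "h \<in> even_classes"
  shows "\<exists>n::int. h \<otimes>\<^bsub>G222\<^esub> inv\<^bsub>G222\<^esub> ((gx \<otimes>\<^bsub>G222\<^esub> gz) [^]\<^bsub>G222\<^esub> n) \<in> zsq_powers"
proof -
  obtain w where h: "h = cls w" and even: "even (length w)"
    using assms by (auto simp: even_classes_def)
  have xz: "gx \<otimes>\<^bsub>G222\<^esub> gz \<in> carrier G222" by simp
  obtain n :: int where "proj h = \<rho> [^]\<^bsub>Q222\<^esub> n \<otimes>\<^bsub>Q222\<^esub> \<one>\<^bsub>Q222\<^esub>"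
    using Q222_normal_form[of w] even by (simp only: h if_False not_True_eq_False) blast
  also have "\<dots> = proj ((gx \<otimes>\<^bsub>G222\<^esub> gz) [^]\<^bsub>G222\<^esub> n)"
    by (simp only: Q222.r_one Q222.int_pow_closed proj.hom_closed[OF xz] proj.hom_int_pow[OF xz])
  finally have eq: "proj h = proj ((gx \<otimes>\<^bsub>G222\<^esub> gz) [^]\<^bsub>G222\<^esub> n)" .
  have "h \<in> carrier G222" by (simp only: h cls_in_carrier)
  then have "h \<otimes>\<^bsub>G222\<^esub> inv\<^bsub>G222\<^esub> ((gx \<otimes>\<^bsub>G222\<^esub> gz) [^]\<^bsub>G222\<^esub> n) \<in> zsq_powers"
    using eq by (rule proj_eq_imp[OF _ G222.int_pow_closed[OF xz]])
  then show ?thesis ..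
qed

lemma G222_mod_even_classes:
  assumes "h \<in> carrier G222"
  shows "\<exists>n::int. h \<otimes>\<^bsub>G222\<^esub> inv\<^bsub>G222\<^esub> (gz [^]\<^bsub>G222\<^esub> n) \<in> even_classes"
proof -
  obtain w where h: "h = cls w" using assms by (auto simp: G222_classes)
  show ?thesis
  proof (cases "even (length w)")
    case True
    then have "h \<otimes>\<^bsub>G222\<^esub> inv\<^bsub>G222\<^esub> (gz [^]\<^bsub>G222\<^esub> (0::int)) \<in> even_classes"
      by (simp add: h cls_in_even_classes_iff)
    then show ?thesis by blast
  next
    case False
    then have "h \<otimes>\<^bsub>G222\<^esub> inv\<^bsub>G222\<^esub> (gz [^]\<^bsub>G222\<^esub> (1::int)) \<in> even_classes"
      by (simp add: h G222_classes cls_in_even_classes_iff)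
    then show ?thesis by blast
  qed
qed

theorem polycyclic_G222: "polycyclic G222"
proof -
  note even = normal_imp_subgroup[OF even_classes_normal]
  have one: "{\<one>\<^bsub>G222\<^esub>} \<lhd> G222\<lparr>carrier := zsq_powers\<rparr>"
    using group.one_is_normal[OF G222.subgroup_imp_group[OF zsq_powers_subgroup]] by simp
  have "\<forall>h\<in>zsq_powers. \<exists>n::int. h \<otimes>\<^bsub>G222\<^esub> inv\<^bsub>G222\<^esub> (zsq [^]\<^bsub>G222\<^esub> n) \<in> {\<one>\<^bsub>G222\<^esub>}"
    by (auto simp: zsq_powers_def) (metis G222.int_pow_closed G222.m_closed G222.r_inv cls_in_carrier)
  then have "polycyclic_seq G222 zsq_powers"
    by (rule polycyclic_seq.extension[OF polycyclic_seq.unity one zsq_powers_subgroup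
          G222.cyclic_Mod_if_generated[OF zsq_powers_subgroup one zsq_in_zsq_powers]])
  moreover have zsq: "zsq_powers \<lhd> G222\<lparr>carrier := even_classes\<rparr>"
    by (rule G222.normal_restrict_supergroup[OF even zsq_powers_normal zsq_powers_subset_even_classes])
  moreover have "gx \<otimes>\<^bsub>G222\<^esub> gz \<in> even_classes"
    using cls_in_even_classes_iff[of "[(GX, False), (GZ, False)]"] by (simp add: G222_classes)
  ultimately have "polycyclic_seq G222 even_classes"
    using even_classes_mod_zsq_powers
    by (intro polycyclic_seq.extension[OF _ zsq even] G222.cyclic_Mod_if_generated[OF even zsq]) auto
  moreover have top: "even_classes \<lhd> G222\<lparr>carrier := carrier G222\<rparr>"
    using even_classes_normal by simp
  ultimately have "polycyclic_seq G222 (carrier G222)"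
    using G222_mod_even_classes
    by (intro polycyclic_seq.extension[OF _ top G222.subgroup_self]
        G222.cyclic_Mod_if_generated[OF G222.subgroup_self top cls_in_carrier]) auto
  then show ?thesis by (simp add: polycyclic_def)
qed

lemma solvable_G222: "solvable G222"
  using G222.polycyclic_seq_imp_solvable_seq polycyclic_G222 by (simp add: polycyclic_def solvable_def)


lemma not_solvable_G_jkl:
  assumes "1 < j" "1 < k" "1 < l" "\<not> (j = 2 \<and> k = 2 \<and> l = 2)"
  shows "\<not> solvable (G_jkl j k l)"
proof -
  have l: "0 < l" using assms by simp
  consider "3 \<le> j" "3 \<le> k \<or> 4 \<le> j" | "j = 3" "k = 2" | "j = 2" "4 \<le> k" | "j = 2" "k = 3"
    | "j = 2" "k = 2" "l = 3" | "j = 2" "k = 2" "4 \<le> l"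
    using assms by linarith
  then show ?thesis
  proof cases
    case 1
    then show ?thesis using not_solvable_G_jkl_if_j_ge_3[OF 1(1) _ 1(2) l] assms by simp
  next
    case 2
    then show ?thesis using not_solvable_G_32l[OF l] by simp
  next
    case 3
    then show ?thesis using not_solvable_G_2kl_if_k_ge_4[OF 3(2) l] by simp
  next
    case 4
    then show ?thesis using not_solvable_G_23l[OF l] by simp
  next
    case 5
    then show ?thesis using not_solvable_G_223 by simp
  next
    case 6
    then show ?thesis using not_solvable_G_22l_if_l_ge_4[OF 6(3)] by simp
  qed
qed

theorem proposition7p2:
  fixes j k l :: nat
  assumes "j > 1" and "k > 1" and "l > 1"
  shows "(solvable (G_jkl j k l) \<longleftrightarrow> j = 2 \<and> k = 2 \<and> l = 2) \<and> polycyclic (G_jkl 2 2 2)"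
  using not_solvable_G_jkl[OF assms] solvable_G222 polycyclic_G222 by blast

end
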